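(* Let $H$ be an undirected graph and let $I$ be an induced minor of $H$. Then $\mathrm{dtd}(I)\le\mathrm{dtd}(H)$.
   Context: A graph $I$ is an induced minor of $H$ if it can be obtained from $H$ by deleting vertices and contracting edges. For a DAG $\vec H$, a source is a vertex of in-degree $0$. A DAG elimination forest of a DAG $\vec H$ is defined recursively: if $\vec H$ is empty, it is the empty forest; if the underlying undirected graph of $\vec H$ is disconnected, it is the union of DAG elimination forests (trees) of its connected components; if the underlying graph is connected and $\vec H$ has exactly one source $s$, it is the single-node tree $s$; otherwise (connected, at least two sources) it is a tree whose root is an arbitrarily chosen source $s$ of $\vec H$ and whose subtrees are the trees of a DAG elimination forest of the DAG obtained from $\vec H$ by deleting $s$ and all vertices reachable from $s$. The depth of a rooted forest is the maximum number of nodes on a root-to-leaf path. $\mathrm{dtd}(\vec H)$ is the minimum depth of a DAG elimination forest of $\vec H$; for an undirected graph $H$, $\mathrm{dtd}(H)$ is the maximum of $\mathrm{dtd}(\vec H)$ over all acyclic orientations $\vec H$ of $H$. *)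

theory Defs
  imports Main
begin

definition ugraph :: "'a set \<Rightarrow> 'a set set \<Rightarrow> bool" where
  "ugraph V E \<longleftrightarrow> finite V \<and> E \<subseteq> {{u, v} | u v. u \<in> V \<and> v \<in> V \<and> u \<noteq> v}"

definition delete_vertex :: "'a \<Rightarrow> 'a set \<times> 'a set set \<Rightarrow> 'a set \<times> 'a set set" where
  "delete_vertex x G = (fst G - {x}, {e \<in> snd G. x \<notin> e})"

text \<open>Contract the edge {u,v}; the merged vertex keeps the name u.\<close>
definition contract_edge :: "'a \<Rightarrow> 'a \<Rightarrow> 'a set \<times> 'a set set \<Rightarrow> 'a set \<times> 'a set set" where
  "contract_edge u v G = (fst G - {v},
     {e \<in> snd G. v \<notin> e} \<union> {{u, w} | w. {v, w} \<in> snd G \<and> w \<noteq> u})"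

inductive obtainable :: "'a set \<times> 'a set set \<Rightarrow> 'a set \<times> 'a set set \<Rightarrow> bool" where
  refl: "obtainable G G"
| del: "obtainable G G' \<Longrightarrow> x \<in> fst G' \<Longrightarrow> obtainable G (delete_vertex x G')"
| con: "obtainable G G' \<Longrightarrow> {u, v} \<in> snd G' \<Longrightarrow> u \<noteq> v \<Longrightarrow> obtainable G (contract_edge u v G')"

definition graph_iso :: "'b set \<Rightarrow> 'b set set \<Rightarrow> 'a set \<Rightarrow> 'a set set \<Rightarrow> bool" where
  "graph_iso V1 E1 V2 E2 \<longleftrightarrow> (\<exists>f. bij_betw f V1 V2 \<and>
     (\<forall>x\<in>V1. \<forall>y\<in>V1. {x, y} \<in> E1 \<longleftrightarrow> {f x, f y} \<in> E2))"

definition induced_minor :: "'b set \<Rightarrow> 'b set set \<Rightarrow> 'a set \<Rightarrow> 'a set set \<Rightarrow> bool" where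
  "induced_minor VI EI VH EH \<longleftrightarrow>
     (\<exists>G'. obtainable (VH, EH) G' \<and> graph_iso VI EI (fst G') (snd G'))"

definition acyclic_orientation :: "'a set \<Rightarrow> 'a set set \<Rightarrow> ('a \<times> 'a) set \<Rightarrow> bool" where
  "acyclic_orientation V E A \<longleftrightarrow>
     A \<subseteq> {(u, v). {u, v} \<in> E} \<and>
     (\<forall>u v. {u, v} \<in> E \<longrightarrow> u \<noteq> v \<longrightarrow> ((u, v) \<in> A \<longleftrightarrow> (v, u) \<notin> A)) \<and>
     acyclic A"

definition restrict_arcs :: "'a set \<Rightarrow> ('a \<times> 'a) set \<Rightarrow> ('a \<times> 'a) set" where
  "restrict_arcs X A = A \<inter> (X \<times> X)"

definition is_source :: "'a set \<Rightarrow> ('a \<times> 'a) set \<Rightarrow> 'a \<Rightarrow> bool" where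
  "is_source V A s \<longleftrightarrow> s \<in> V \<and> (\<forall>u. (u, s) \<notin> restrict_arcs V A)"

definition reach :: "'a set \<Rightarrow> ('a \<times> 'a) set \<Rightarrow> 'a \<Rightarrow> 'a set" where
  "reach V A s = {v \<in> V. (s, v) \<in> (restrict_arcs V A)\<^sup>*}"

definition component :: "'a set \<Rightarrow> ('a \<times> 'a) set \<Rightarrow> 'a \<Rightarrow> 'a set" where
  "component V A v = {w \<in> V. (v, w) \<in> (restrict_arcs V A \<union> (restrict_arcs V A)\<inverse>)\<^sup>*}"

definition components :: "'a set \<Rightarrow> ('a \<times> 'a) set \<Rightarrow> 'a set set" where
  "components V A = component V A ` V"

definition uconnected :: "'a set \<Rightarrow> ('a \<times> 'a) set \<Rightarrow> bool" where
  "uconnected V A \<longleftrightarrow> V \<noteq> {} \<and> (\<forall>v\<in>V. component V A v = V)"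

inductive elim_depth :: "'a set \<Rightarrow> ('a \<times> 'a) set \<Rightarrow> nat \<Rightarrow> bool" where
  empty: "elim_depth {} A 0"
| disconn: "V \<noteq> {} \<Longrightarrow> \<not> uconnected V A \<Longrightarrow>
            (\<forall>C\<in>components V A. elim_depth C A (d C)) \<Longrightarrow>
            elim_depth V A (Max (d ` components V A))"
| one_source: "uconnected V A \<Longrightarrow> is_source V A s \<Longrightarrow>
            (\<forall>t. is_source V A t \<longrightarrow> t = s) \<Longrightarrow> elim_depth V A 1"
| many_sources: "uconnected V A \<Longrightarrow> is_source V A s \<Longrightarrow> is_source V A t \<Longrightarrow> t \<noteq> s \<Longrightarrow>
            elim_depth (V - reach V A s) A d \<Longrightarrow> elim_depth V A (Suc d)"

definition dag_dtd :: "'a set \<Rightarrow> ('a \<times> 'a) set \<Rightarrow> nat" where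
  "dag_dtd V A = (LEAST d. elim_depth V A d)"

definition dtd :: "'a set \<Rightarrow> 'a set set \<Rightarrow> nat" where
  "dtd V E = Max {dag_dtd V A | A. acyclic_orientation V E A}"

end

theory Submission
  imports Defs
begin

text \<open>
  Since dtd is a maximum over acyclic orientations, it suffices to show that every acyclic
  orientation of a graph obtained by one deletion or contraction is dominated, in DAG elimination
  depth, by some acyclic orientation of the original graph; isomorphisms merely relabel vertices.

  To delete x, orient every edge at x towards x. Then all vertices but x form a
  predecessor-closed set, and restricting a DAG to a predecessor-closed set never increases its
  elimination depth: sources of the subset are sources of the whole DAG, and the reach of such a
  source is cut down to the subset.

  To contract the edge uv into u, orient it as u \<rightarrow> v and every other edge like its image;
  contracting the arc u \<rightarrow> v then gives back the given orientation. Contracting an arc never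
  increases the elimination depth: by induction along the elimination forest, the only delicate
  case is when v is reached from the chosen source s, and then the remainder after removing the
  reach of a source above s is a predecessor-closed part of the remainder after removing the reach
  of s.
\<close>

section \<open>Components, reachability and closed vertex sets\<close>

definition arc_closed :: "'a set \<Rightarrow> ('a \<times> 'a) set \<Rightarrow> 'a set \<Rightarrow> bool" where
  "arc_closed V A P \<longleftrightarrow> (\<forall>a b. (a, b) \<in> restrict_arcs V A \<longrightarrow> (a \<in> P \<longleftrightarrow> b \<in> P))"

lemma restrict_arcs_mono: "W \<subseteq> V \<Longrightarrow> restrict_arcs W A \<subseteq> restrict_arcs V A"
  by (auto simp: restrict_arcs_def)

lemma restrict_arcs_subset: "W \<subseteq> V \<Longrightarrow> restrict_arcs W A = restrict_arcs V A \<inter> W \<times> W"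
  by (auto simp: restrict_arcs_def)

lemma arc_closed_subset: "arc_closed V A P \<Longrightarrow> W \<subseteq> V \<Longrightarrow> arc_closed W A P"
  using restrict_arcs_mono unfolding arc_closed_def by blast

lemma arc_closed_cong: "arc_closed W A P \<Longrightarrow> P \<inter> W = Q \<inter> W \<Longrightarrow> arc_closed W A Q"
  unfolding arc_closed_def restrict_arcs_def by blast

lemma rtrancl_closed_set:
  assumes "(x, y) \<in> R\<^sup>*" "x \<in> P" "\<And>a b. (a, b) \<in> R \<Longrightarrow> a \<in> P \<Longrightarrow> b \<in> P"
  shows "y \<in> P \<and> (x, y) \<in> (R \<inter> P \<times> P)\<^sup>*"
  using assms(1)
proof (induction rule: rtrancl_induct)
  case base
  then show ?case using assms(2) by simp
next
  case (step y z)
  then have "z \<in> P" using assms(3) by blast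
  with step show ?case by (meson IntI SigmaI rtrancl.rtrancl_into_rtrancl)
qed

lemma is_source_subset: "is_source V A s \<Longrightarrow> W \<subseteq> V \<Longrightarrow> s \<in> W \<Longrightarrow> is_source W A s"
  using restrict_arcs_mono unfolding is_source_def by blast

lemma component_subset: "component V A x \<subseteq> V"
  by (auto simp: component_def)

lemma component_self: "x \<in> V \<Longrightarrow> x \<in> component V A x"
  by (auto simp: component_def)

lemma arc_closed_component: "arc_closed V A (component V A x)"
  unfolding arc_closed_def
proof (intro allI impI)
  fix a b assume ab: "(a, b) \<in> restrict_arcs V A"
  let ?S = "restrict_arcs V A \<union> (restrict_arcs V A)\<inverse>"
  have "(a, b) \<in> ?S" "(b, a) \<in> ?S" using ab by auto
  then have "(x, a) \<in> ?S\<^sup>* \<longleftrightarrow> (x, b) \<in> ?S\<^sup>*"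
    by (meson rtrancl.rtrancl_into_rtrancl)
  moreover have "a \<in> V" "b \<in> V" using ab by (auto simp: restrict_arcs_def)
  ultimately show "a \<in> component V A x \<longleftrightarrow> b \<in> component V A x"
    by (simp add: component_def)
qed

lemma component_eq:
  assumes "y \<in> component V A x"
  shows "component V A y = component V A x"
proof -
  let ?S = "restrict_arcs V A \<union> (restrict_arcs V A)\<inverse>"
  have "sym (?S\<^sup>*)" by (rule sym_rtrancl) (auto simp: sym_def)
  moreover have xy: "(x, y) \<in> ?S\<^sup>*" using assms by (simp add: component_def)
  ultimately have "(y, x) \<in> ?S\<^sup>*" by (meson symD)
  with xy have "(y, w) \<in> ?S\<^sup>* \<longleftrightarrow> (x, w) \<in> ?S\<^sup>*" for w
    by (meson rtrancl_trans)
  then show ?thesis unfolding component_def by simp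
qed

lemma component_of_arc_closed:
  assumes "arc_closed V A P" "P \<subseteq> V" "x \<in> P"
  shows "component P A x = component V A x"
proof
  have "(restrict_arcs P A \<union> (restrict_arcs P A)\<inverse>)\<^sup>* \<subseteq> (restrict_arcs V A \<union> (restrict_arcs V A)\<inverse>)\<^sup>*"
    using restrict_arcs_mono[OF assms(2)] by (intro rtrancl_mono) blast
  then show "component P A x \<subseteq> component V A x"
    unfolding component_def using assms(2) by blast
next
  let ?S = "restrict_arcs V A \<union> (restrict_arcs V A)\<inverse>"
  have eq: "?S \<inter> P \<times> P = restrict_arcs P A \<union> (restrict_arcs P A)\<inverse>"
    using assms(2) by (auto simp: restrict_arcs_def)
  have cl: "\<And>a b. (a, b) \<in> ?S \<Longrightarrow> a \<in> P \<Longrightarrow> b \<in> P"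
    using assms(1) unfolding arc_closed_def by blast
  show "component V A x \<subseteq> component P A x"
  proof
    fix y assume "y \<in> component V A x"
    then have "(x, y) \<in> ?S\<^sup>*" by (simp add: component_def)
    from rtrancl_closed_set[OF this assms(3) cl] show "y \<in> component P A x"
      by (simp add: component_def eq)
  qed
qed

lemma reach_self: "s \<in> V \<Longrightarrow> s \<in> reach V A s"
  by (simp add: reach_def)

lemma reach_arc: "(a, b) \<in> restrict_arcs V A \<Longrightarrow> a \<in> reach V A s \<Longrightarrow> b \<in> reach V A s"
  by (auto simp: reach_def restrict_arcs_def intro: rtrancl.rtrancl_into_rtrancl)

lemma reach_subset_component: "reach V A s \<subseteq> component V A s"
proof -
  have "(restrict_arcs V A)\<^sup>* \<subseteq> (restrict_arcs V A \<union> (restrict_arcs V A)\<inverse>)\<^sup>*"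
    by (rule rtrancl_mono) blast
  then show ?thesis unfolding reach_def component_def by blast
qed

lemma uconnected_component:
  assumes "x \<in> V"
  shows "uconnected (component V A x) A"
  unfolding uconnected_def
proof (intro conjI ballI)
  show "component V A x \<noteq> {}" using component_self[OF assms] by auto
  fix w assume w: "w \<in> component V A x"
  have "component (component V A x) A w = component V A w"
    by (rule component_of_arc_closed[OF arc_closed_component component_subset w])
  also have "\<dots> = component V A x" using component_eq[OF w] .
  finally show "component (component V A x) A w = component V A x" .
qed

lemma components_uconnected: "uconnected V A \<Longrightarrow> components V A = {V}"
  unfolding uconnected_def components_def by auto

lemma finite_components: "finite V \<Longrightarrow> finite (components V A)"
  unfolding components_def by simp

lemma components_subset: "C \<in> components V A \<Longrightarrow> C \<subseteq> V"
  by (auto simp: components_def component_def)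

lemma components_arc_closed: "C \<in> components V A \<Longrightarrow> arc_closed V A C"
  by (clarsimp simp: components_def arc_closed_component)

lemma components_eq_component: "C \<in> components V A \<Longrightarrow> y \<in> C \<Longrightarrow> C = component V A y"
  by (auto simp: components_def component_eq)

lemma Union_components: "\<Union> (components V A) = V"
proof
  show "\<Union> (components V A) \<subseteq> V" using components_subset by blast
  show "V \<subseteq> \<Union> (components V A)"
  proof
    fix x assume "x \<in> V"
    then show "x \<in> \<Union> (components V A)"
      using component_self[of x V A] by (auto simp: components_def)
  qed
qed

definition pred_closed :: "'a set \<Rightarrow> ('a \<times> 'a) set \<Rightarrow> 'a set \<Rightarrow> bool" where
  "pred_closed V A X \<longleftrightarrow> X \<subseteq> V \<and> (\<forall>a b. (a, b) \<in> restrict_arcs V A \<longrightarrow> b \<in> X \<longrightarrow> a \<in> X)"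

lemma pred_closed_if_arc_closed: "arc_closed V A P \<Longrightarrow> P \<subseteq> V \<Longrightarrow> pred_closed V A P"
  unfolding arc_closed_def pred_closed_def by blast

lemma pred_closed_Int: "pred_closed V A X \<Longrightarrow> W \<subseteq> V \<Longrightarrow> pred_closed W A (X \<inter> W)"
  unfolding pred_closed_def restrict_arcs_def by blast

lemma pred_closed_rtrancl:
  assumes "pred_closed V A X" "(s, y) \<in> (restrict_arcs V A)\<^sup>*" "y \<in> X"
  shows "s \<in> X \<and> (s, y) \<in> (restrict_arcs X A)\<^sup>*"
proof -
  have ys: "(y, s) \<in> ((restrict_arcs V A)\<inverse>)\<^sup>*" using assms(2) by (simp add: rtrancl_converse)
  have cl: "\<And>a b. (a, b) \<in> (restrict_arcs V A)\<inverse> \<Longrightarrow> a \<in> X \<Longrightarrow> b \<in> X"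
    using assms(1) unfolding pred_closed_def by blast
  have "s \<in> X \<and> (y, s) \<in> ((restrict_arcs V A)\<inverse> \<inter> X \<times> X)\<^sup>*"
    by (rule rtrancl_closed_set[OF ys assms(3) cl])
  moreover have "(restrict_arcs V A)\<inverse> \<inter> X \<times> X = (restrict_arcs X A)\<inverse>"
    using assms(1) by (auto simp: pred_closed_def restrict_arcs_def)
  ultimately show ?thesis by (simp add: rtrancl_converse)
qed

lemma reach_pred_closed:
  assumes "pred_closed V A X" "s \<in> X"
  shows "reach X A s = reach V A s \<inter> X"
proof
  have "X \<subseteq> V" using assms(1) by (simp add: pred_closed_def)
  then have "(restrict_arcs X A)\<^sup>* \<subseteq> (restrict_arcs V A)\<^sup>*"
    by (intro rtrancl_mono restrict_arcs_mono)
  then show "reach X A s \<subseteq> reach V A s \<inter> X"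
    using \<open>X \<subseteq> V\<close> unfolding reach_def by blast
  show "reach V A s \<inter> X \<subseteq> reach X A s"
    using pred_closed_rtrancl[OF assms(1)] unfolding reach_def by blast
qed

lemma pred_closed_source: "pred_closed V A X \<Longrightarrow> is_source X A s \<Longrightarrow> is_source V A s"
  unfolding pred_closed_def is_source_def restrict_arcs_def by blast

section \<open>Elimination depth\<close>

lemma elim_depth_component:
  assumes "elim_depth W A e" "finite W" "x \<in> W"
  shows "\<exists>e'\<le>e. elim_depth (component W A x) A e'"
  using assms(1)
proof cases
  case (disconn d)
  have C: "component W A x \<in> components W A" using assms(3) by (auto simp: components_def)
  then have "d (component W A x) \<le> e"
    using disconn finite_components[OF assms(2)] by simp
  then show ?thesis using disconn C by blast
next
  case (one_source s)
  then have "component W A x = W" using assms(3) unfolding uconnected_def by blast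
  then show ?thesis using assms(1) by auto
next
  case (many_sources s t d)
  then have "component W A x = W" using assms(3) unfolding uconnected_def by blast
  then show ?thesis using assms(1) by auto
qed (use assms in simp)

lemma elim_depth_partition:
  assumes "finite V" "\<Union> PP = V"
    and "\<And>P. P \<in> PP \<Longrightarrow> arc_closed V A P \<and> P \<subseteq> V \<and> (\<exists>e\<le>m. elim_depth P A e)"
  shows "\<exists>e\<le>m. elim_depth V A e"
proof (cases "V = {}")
  case True
  then show ?thesis using elim_depth.empty by blast
next
  case False
  have "\<exists>e\<le>m. elim_depth K A e" if K: "K \<in> components V A" for K
  proof -
    obtain x where x: "x \<in> V" "K = component V A x"
      using K by (auto simp: components_def)
    then obtain P where P: "P \<in> PP" "x \<in> P" using assms(2) by auto
    then obtain e where e: "e \<le> m" "elim_depth P A e" "arc_closed V A P" "P \<subseteq> V"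
      using assms(3) by blast
    have "K = component P A x" using component_of_arc_closed[OF e(3,4) P(2)] x by simp
    moreover obtain e' where "e' \<le> e" "elim_depth (component P A x) A e'"
      using elim_depth_component[OF e(2) finite_subset[OF e(4) assms(1)] P(2)] by blast
    ultimately show ?thesis using e(1) le_trans by blast
  qed
  then obtain g where g: "\<And>K. K \<in> components V A \<Longrightarrow> g K \<le> m \<and> elim_depth K A (g K)"
    using bchoice[of "components V A" "\<lambda>K e. e \<le> m \<and> elim_depth K A e"] by blast
  have "elim_depth V A (Max (g ` components V A))"
  proof (cases "uconnected V A")
    case True
    then show ?thesis using g by (simp add: components_uconnected)
  next
    case False
    then show ?thesis using g \<open>V \<noteq> {}\<close> by (intro elim_depth.disconn) auto
  qed
  moreover have "Max (g ` components V A) \<le> m"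
    using g finite_components[OF assms(1)] \<open>V \<noteq> {}\<close> by (simp add: components_def)
  ultimately show ?thesis by blast
qed

lemma elim_depth_partition_Max:
  assumes "finite V" "finite I" "(\<Union>i\<in>I. P i) = V"
    and "\<And>i. i \<in> I \<Longrightarrow> arc_closed V A (P i) \<and> P i \<subseteq> V \<and> (\<exists>e\<le>d i. elim_depth (P i) A e)"
  shows "\<exists>e\<le>Max (d ` I). elim_depth V A e"
proof (rule elim_depth_partition[OF assms(1,3)])
  fix Q assume "Q \<in> P ` I"
  then obtain i where i: "i \<in> I" "Q = P i" by blast
  then obtain e where e: "e \<le> d i" "elim_depth Q A e" using assms(4) by blast
  moreover have "d i \<le> Max (d ` I)" using assms(2) i(1) by simp
  ultimately have "\<exists>e\<le>Max (d ` I). elim_depth Q A e" by (intro exI[of _ e]) simp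
  then show "arc_closed V A Q \<and> Q \<subseteq> V \<and> (\<exists>e\<le>Max (d ` I). elim_depth Q A e)"
    using assms(4) i by blast
qed

lemma elim_depth_Int_components:
  assumes "finite W" "X \<subseteq> W" "\<And>C. C \<in> components W A \<Longrightarrow> \<exists>e\<le>d C. elim_depth (X \<inter> C) A e"
  shows "\<exists>e\<le>Max (d ` components W A). elim_depth X A e"
proof (rule elim_depth_partition_Max)
  show "finite X" using assms(2,1) by (rule finite_subset)
  show "finite (components W A)" using assms(1) by (rule finite_components)
  show "(\<Union>C\<in>components W A. X \<inter> C) = X" using assms(2) Union_components[of W A] by blast
  fix C assume C: "C \<in> components W A"
  have "arc_closed X A (X \<inter> C)"
    by (rule arc_closed_cong[OF arc_closed_subset[OF components_arc_closed[OF C] assms(2)]]) blast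
  then show "arc_closed X A (X \<inter> C) \<and> X \<inter> C \<subseteq> X \<and> (\<exists>e\<le>d C. elim_depth (X \<inter> C) A e)"
    using assms(3)[OF C] by blast
qed

lemma elim_depth_arc_closed_subset:
  assumes "elim_depth W A e" "finite W" "arc_closed W A U" "U \<subseteq> W"
  shows "\<exists>e'\<le>e. elim_depth U A e'"
proof (rule elim_depth_partition)
  show "finite U" using assms(2,4) by (rule finite_subset[rotated])
  show "\<Union> (components U A) = U" by (rule Union_components)
  fix K assume "K \<in> components U A"
  then obtain x where x: "x \<in> U" "K = component U A x" by (auto simp: components_def)
  then have "K = component W A x" using component_of_arc_closed[OF assms(3,4)] by simp
  moreover have "x \<in> W" using x(1) assms(4) by blast
  ultimately have "\<exists>e'\<le>e. elim_depth K A e'" using elim_depth_component[OF assms(1,2)] by blast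
  moreover have "arc_closed U A K" "K \<subseteq> U"
    using x arc_closed_component component_subset by simp_all
  ultimately show "arc_closed U A K \<and> K \<subseteq> U \<and> (\<exists>e'\<le>e. elim_depth K A e')" by blast
qed

lemma elim_depth_uconnected_source:
  assumes "uconnected V A" "is_source V A s" "elim_depth (V - reach V A s) A e"
  shows "\<exists>e'\<le>Suc e. elim_depth V A e'"
proof (cases "\<exists>t. is_source V A t \<and> t \<noteq> s")
  case True
  then obtain t where "is_source V A t" "t \<noteq> s" by blast
  then have "elim_depth V A (Suc e)" by (rule elim_depth.many_sources[OF assms(1,2) _ _ assms(3)])
  then show ?thesis by blast
next
  case False
  then have "elim_depth V A 1" using elim_depth.one_source[OF assms(1,2)] by blast
  then show ?thesis by auto
qed

lemma elim_depth_remove_reach: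
  assumes "finite V" "is_source V A s" "elim_depth (V - reach V A s) A e"
  shows "\<exists>e'\<le>Suc e. elim_depth V A e'"
proof (rule elim_depth_partition[OF assms(1) Union_components])
  let ?R = "reach V A s"
  have sV: "s \<in> V" using assms(2) by (simp add: is_source_def)
  fix C assume C: "C \<in> components V A"
  have clC: "arc_closed V A C" and CV: "C \<subseteq> V"
    using C by (simp_all add: components_arc_closed components_subset)
  have "arc_closed (V - ?R) A (C - ?R)"
    by (rule arc_closed_cong[OF arc_closed_subset[OF clC]]) auto
  then obtain e1 where e1: "e1 \<le> e" "elim_depth (C - ?R) A e1"
    using elim_depth_arc_closed_subset[OF assms(3)] assms(1) CV by blast
  have "\<exists>e'\<le>Suc e. elim_depth C A e'"
  proof (cases "s \<in> C")
    case True
    then have Cs: "C = component V A s" by (rule components_eq_component[OF C])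
    then have "uconnected C A" using uconnected_component[OF sV] by simp
    moreover have "is_source C A s" by (rule is_source_subset[OF assms(2) CV True])
    moreover have "reach C A s = ?R"
      using reach_pred_closed[OF pred_closed_if_arc_closed[OF clC CV] True]
        reach_subset_component[of V A s] Cs by blast
    ultimately obtain e' where "e' \<le> Suc e1" "elim_depth C A e'"
      using elim_depth_uconnected_source e1(2) by metis
    then show ?thesis using e1(1) by (intro exI[of _ e']) simp
  next
    case False
    have "y \<notin> ?R" if y: "y \<in> C" for y
    proof
      assume "y \<in> ?R"
      then have "component V A y = component V A s"
        using reach_subset_component component_eq by fast
      then have "s \<in> C"
        using components_eq_component[OF C y] component_self[OF sV] by simp
      then show False using False by blast
    qed
    then have "C - ?R = C" by blast
    then show ?thesis using e1 le_SucI by (intro exI[of _ e1]) simp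
  qed
  then show "arc_closed V A C \<and> C \<subseteq> V \<and> (\<exists>e'\<le>Suc e. elim_depth C A e')"
    using clC CV by blast
qed

lemma elim_depth_le_one:
  assumes "finite V" "is_source V A s" "V \<subseteq> reach V A s"
  shows "\<exists>e\<le>1. elim_depth V A e"
proof -
  have "V - reach V A s = {}" using assms(3) by blast
  then have "elim_depth (V - reach V A s) A 0" by (simp only: elim_depth.empty)
  from elim_depth_remove_reach[OF assms(1,2) this] show ?thesis by simp
qed

lemma is_source_if_reaches_all:
  assumes "acyclic A" "s \<in> V" "V \<subseteq> reach V A s"
  shows "is_source V A s"
  unfolding is_source_def
proof (intro conjI allI notI)
  show "s \<in> V" by (rule assms(2))
  fix p assume ps: "(p, s) \<in> restrict_arcs V A"
  then have "(s, p) \<in> (restrict_arcs V A)\<^sup>*"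
    using assms(3) by (auto simp: reach_def restrict_arcs_def)
  with ps have "(s, s) \<in> (restrict_arcs V A)\<^sup>+" by (simp add: rtrancl_into_trancl1)
  moreover have "acyclic (restrict_arcs V A)"
    by (rule acyclic_subset[OF assms(1)]) (auto simp: restrict_arcs_def)
  ultimately show False unfolding acyclic_def by blast
qed

lemma exists_source_reaching:
  assumes "finite V" "acyclic A" "y \<in> V"
  shows "\<exists>s. is_source V A s \<and> y \<in> reach V A s"
proof -
  let ?r = "restrict_arcs V A"
  have "finite ?r"
    by (rule finite_subset[of _ "V \<times> V"]) (auto simp: restrict_arcs_def assms(1))
  moreover have "acyclic ?r" by (rule acyclic_subset[OF assms(2)]) (auto simp: restrict_arcs_def)
  ultimately have "wf ?r" by (rule finite_acyclic_wf)
  then show ?thesis using assms(3)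
  proof (induction y rule: wf_induct_rule)
    case (less y)
    show ?case
    proof (cases "\<exists>z. (z, y) \<in> ?r")
      case True
      then obtain z where z: "(z, y) \<in> ?r" by blast
      then have "z \<in> V" by (simp add: restrict_arcs_def)
      from less.IH[OF z this] obtain s where s: "is_source V A s" "(s, z) \<in> ?r\<^sup>*"
        by (auto simp: reach_def)
      then have "(s, y) \<in> ?r\<^sup>*" using z by (meson rtrancl.rtrancl_into_rtrancl)
      then show ?thesis using s(1) less.prems by (auto simp: reach_def)
    next
      case False
      then show ?thesis using less.prems by (auto simp: is_source_def reach_def)
    qed
  qed
qed

lemma elim_depth_exists:
  assumes "finite V" "acyclic A"
  shows "\<exists>d. elim_depth V A d"
  using assms(1)
proof (induction V rule: finite_psubset_induct)
  case (psubset V)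
  consider "V = {}" | "V \<noteq> {}" "uconnected V A" | "V \<noteq> {}" "\<not> uconnected V A" by blast
  then show ?case
  proof cases
    case 1
    then show ?thesis using elim_depth.empty by blast
  next
    case 2
    then obtain y where "y \<in> V" by blast
    then obtain s where s: "is_source V A s"
      using exists_source_reaching[OF psubset.hyps(1) assms(2)] by blast
    then have "V - reach V A s \<subset> V" by (auto simp: is_source_def reach_def)
    then obtain d where "elim_depth (V - reach V A s) A d" using psubset.IH by blast
    then show ?thesis using elim_depth_uconnected_source[OF 2(2) s] by blast
  next
    case 3
    have "\<exists>d. elim_depth C A d" if C: "C \<in> components V A" for C
    proof -
      have "C \<noteq> V"
      proof
        assume "C = V"
        then have "uconnected V A"
          using components_eq_component[OF C] 3(1) by (auto simp: uconnected_def)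
        then show False using 3(2) by blast
      qed
      then have "C \<subset> V" using components_subset[OF C] by blast
      then show ?thesis using psubset.IH by blast
    qed
    then obtain g where "\<forall>C\<in>components V A. elim_depth C A (g C)"
      using bchoice[of "components V A" "\<lambda>C d. elim_depth C A d"] by blast
    then show ?thesis using elim_depth.disconn[OF 3] by blast
  qed
qed

lemma restrict_arcs_eq_cong:
  assumes "restrict_arcs V A = restrict_arcs V B"
  shows "is_source V A = is_source V B" "reach V A = reach V B"
    "component V A = component V B" "components V A = components V B"
    "uconnected V A = uconnected V B"
proof -
  show "is_source V A = is_source V B" by (rule ext) (simp add: is_source_def assms)
  show "reach V A = reach V B" by (rule ext) (simp add: reach_def assms)
  show comp: "component V A = component V B" by (rule ext) (simp add: component_def assms)
  show "components V A = components V B" by (simp add: components_def comp)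
  show "uconnected V A = uconnected V B" by (simp add: uconnected_def comp)
qed

lemma elim_depth_cong:
  "elim_depth V A d \<Longrightarrow> restrict_arcs V A = restrict_arcs V B \<Longrightarrow> elim_depth V B d"
proof (induction rule: elim_depth.induct)
  case (empty A)
  show ?case by (rule elim_depth.empty)
next
  case (disconn V A d)
  note eqs = restrict_arcs_eq_cong[OF disconn.prems]
  have "elim_depth C B (d C)" if C: "C \<in> components V B" for C
  proof -
    have "restrict_arcs C A = restrict_arcs C B"
      using disconn.prems components_subset[OF C] by (simp add: restrict_arcs_subset)
    then show ?thesis using disconn.IH C eqs(4) by blast
  qed
  then have "elim_depth V B (Max (d ` components V B))"
    using elim_depth.disconn[OF disconn.hyps(1)] disconn.hyps(2) eqs(5) by blast
  then show ?case using eqs(4) by simp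
next
  case (one_source V A s)
  note eqs = restrict_arcs_eq_cong[OF one_source.prems]
  show ?case by (rule elim_depth.one_source[OF one_source.hyps[unfolded eqs]])
next
  case (many_sources V A s t d)
  note eqs = restrict_arcs_eq_cong[OF many_sources.prems]
  have "restrict_arcs (V - reach V A s) A = restrict_arcs (V - reach V A s) B"
    using many_sources.prems by (simp add: restrict_arcs_subset[of "V - reach V A s" V])
  then have "elim_depth (V - reach V B s) B d" using many_sources.IH eqs(2) by simp
  then show ?case by (rule elim_depth.many_sources[OF many_sources.hyps(1-4)[unfolded eqs]])
qed

lemma dag_dtd_le: "elim_depth V A d \<Longrightarrow> dag_dtd V A \<le> d"
  unfolding dag_dtd_def by (rule Least_le)

lemma elim_depth_dag_dtd:
  assumes "finite V" "acyclic A"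
  shows "elim_depth V A (dag_dtd V A)"
proof -
  obtain d where "elim_depth V A d" using elim_depth_exists[OF assms] by blast
  then show ?thesis unfolding dag_dtd_def by (rule LeastI)
qed

lemma elim_depth_pred_closed:
  "elim_depth W A d \<Longrightarrow> finite W \<Longrightarrow> acyclic A \<Longrightarrow> pred_closed W A X \<Longrightarrow> \<exists>e\<le>d. elim_depth X A e"
proof (induction arbitrary: X rule: elim_depth.induct)
  case (empty A)
  then show ?case using elim_depth.empty by (auto simp: pred_closed_def)
next
  case (disconn W A d)
  show ?case
  proof (rule elim_depth_Int_components[OF disconn.prems(1)])
    show "X \<subseteq> W" using disconn.prems(3) by (simp add: pred_closed_def)
    fix C assume C: "C \<in> components W A"
    have CW: "C \<subseteq> W" by (rule components_subset[OF C])
    then have "pred_closed C A (X \<inter> C)" using pred_closed_Int[OF disconn.prems(3)] by blast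
    then show "\<exists>e\<le>d C. elim_depth (X \<inter> C) A e"
      using disconn.IH C disconn.prems(1,2) finite_subset[OF CW] by blast
  qed
next
  case (one_source W A s)
  show ?case
  proof (cases "X = {}")
    case True
    then show ?thesis using elim_depth.empty by blast
  next
    case False
    have "X \<subseteq> W" using one_source.prems(3) by (simp add: pred_closed_def)
    then have finX: "finite X" using one_source.prems(1) by (rule finite_subset)
    have reached: "is_source X A s \<and> y \<in> reach X A s" if y: "y \<in> X" for y
    proof -
      obtain s1 where s1: "is_source X A s1" "y \<in> reach X A s1"
        using exists_source_reaching[OF finX one_source.prems(2) y] by blast
      have "s1 = s"
        using one_source.hyps(3) pred_closed_source[OF one_source.prems(3) s1(1)] by blast
      then show ?thesis using s1 by simp
    qed
    then have "is_source X A s" "X \<subseteq> reach X A s" using False by blast+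
    then show ?thesis using elim_depth_le_one[OF finX] by simp
  qed
next
  case (many_sources W A s t d)
  let ?W' = "W - reach W A s"
  have finW': "finite ?W'" using many_sources.prems(1) by simp
  have IH: "\<exists>e\<le>d. elim_depth Y A e" if "pred_closed ?W' A Y" for Y
    using many_sources.IH finW' many_sources.prems(2) that by blast
  have XW': "pred_closed ?W' A (X \<inter> ?W')"
    using many_sources.prems(3) by (rule pred_closed_Int) blast
  show ?case
  proof (cases "s \<in> X")
    case True
    have "X \<subseteq> W" using many_sources.prems(3) by (simp add: pred_closed_def)
    then have finX: "finite X" using many_sources.prems(1) by (rule finite_subset)
    have src: "is_source X A s" by (rule is_source_subset[OF many_sources.hyps(2) \<open>X \<subseteq> W\<close> True])
    have "X - reach X A s = X \<inter> ?W'"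
      using reach_pred_closed[OF many_sources.prems(3) True] \<open>X \<subseteq> W\<close> by blast
    moreover obtain e where e: "e \<le> d" "elim_depth (X \<inter> ?W') A e" using IH[OF XW'] by blast
    ultimately have "elim_depth (X - reach X A s) A e" by simp
    from elim_depth_remove_reach[OF finX src this] obtain e' where "e' \<le> Suc e" "elim_depth X A e'"
      by blast
    then show ?thesis using e(1) by (intro exI[of _ e']) simp
  next
    case False
    have "X \<inter> reach W A s = {}"
      using pred_closed_rtrancl[OF many_sources.prems(3)] False by (auto simp: reach_def)
    then have "X \<inter> ?W' = X" using many_sources.prems(3) by (auto simp: pred_closed_def)
    then obtain e where "e \<le> d" "elim_depth X A e" using IH[OF XW'] by auto
    then show ?thesis by (intro exI[of _ e]) simp
  qed
qed

section \<open>Contracting an arc\<close>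

definition merge_vertex :: "'a \<Rightarrow> 'a \<Rightarrow> 'a \<Rightarrow> 'a" where
  "merge_vertex u v x = (if x = v then u else x)"

definition contract_arcs :: "'a \<Rightarrow> 'a \<Rightarrow> ('a \<times> 'a) set \<Rightarrow> ('a \<times> 'a) set" where
  "contract_arcs u v A =
     {(merge_vertex u v a, merge_vertex u v b) | a b.
       (a, b) \<in> A \<and> merge_vertex u v a \<noteq> merge_vertex u v b}"

lemma merge_vertex_neq: "u \<noteq> v \<Longrightarrow> merge_vertex u v x \<noteq> v"
  by (simp add: merge_vertex_def)

lemma merge_vertex_other: "x \<noteq> v \<Longrightarrow> merge_vertex u v x = x"
  by (simp add: merge_vertex_def)

lemma merge_vertex_merged: "merge_vertex u v v = u"
  by (simp add: merge_vertex_def)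

lemma merge_vertex_in: "x \<in> W \<Longrightarrow> u \<in> W \<Longrightarrow> merge_vertex u v x \<in> W"
  by (simp add: merge_vertex_def)

lemma merge_vertex_eq_cases: "merge_vertex u v a = p \<Longrightarrow> (a = p \<and> a \<noteq> v) \<or> (a = v \<and> p = u)"
  by (auto simp: merge_vertex_def)

lemma restrict_contract_arcs:
  assumes "u \<in> W" "v \<in> W" "u \<noteq> v"
  shows "(p, q) \<in> restrict_arcs (W - {v}) (contract_arcs u v A) \<longleftrightarrow>
    (\<exists>a b. (a, b) \<in> restrict_arcs W A \<and> p = merge_vertex u v a \<and> q = merge_vertex u v b \<and> p \<noteq> q)"
proof
  assume "(p, q) \<in> restrict_arcs (W - {v}) (contract_arcs u v A)"
  then obtain a b where ab: "(a, b) \<in> A" "p = merge_vertex u v a" "q = merge_vertex u v b" "p \<noteq> q"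
      "p \<in> W" "q \<in> W"
    unfolding restrict_arcs_def contract_arcs_def by blast
  have "a \<in> W" using merge_vertex_eq_cases[OF ab(2)[symmetric]] ab(5) assms(2) by blast
  moreover have "b \<in> W" using merge_vertex_eq_cases[OF ab(3)[symmetric]] ab(6) assms(2) by blast
  ultimately show "\<exists>a b. (a, b) \<in> restrict_arcs W A \<and> p = merge_vertex u v a \<and>
      q = merge_vertex u v b \<and> p \<noteq> q"
    using ab unfolding restrict_arcs_def by blast
next
  assume "\<exists>a b. (a, b) \<in> restrict_arcs W A \<and> p = merge_vertex u v a \<and>
    q = merge_vertex u v b \<and> p \<noteq> q"
  then obtain a b where ab: "(a, b) \<in> A" "a \<in> W" "b \<in> W" "p = merge_vertex u v a"
      "q = merge_vertex u v b" "p \<noteq> q"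
    unfolding restrict_arcs_def by blast
  have "p \<in> W - {v}"
    using merge_vertex_in[OF ab(2) assms(1)] merge_vertex_neq[OF assms(3)] ab(4) by simp
  moreover have "q \<in> W - {v}"
    using merge_vertex_in[OF ab(3) assms(1)] merge_vertex_neq[OF assms(3)] ab(5) by simp
  moreover have "(p, q) \<in> contract_arcs u v A" using ab unfolding contract_arcs_def by blast
  ultimately show "(p, q) \<in> restrict_arcs (W - {v}) (contract_arcs u v A)"
    unfolding restrict_arcs_def by blast
qed

lemma rtrancl_contract_arcs:
  assumes "u \<in> W" "v \<in> W" "u \<noteq> v" "(a, b) \<in> (restrict_arcs W A)\<^sup>*"
  shows "(merge_vertex u v a, merge_vertex u v b)
    \<in> (restrict_arcs (W - {v}) (contract_arcs u v A))\<^sup>*"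
  using assms(4)
proof (induction rule: rtrancl_induct)
  case (step b c)
  show ?case
  proof (cases "merge_vertex u v b = merge_vertex u v c")
    case True
    then show ?thesis using step.IH by simp
  next
    case False
    then have "(merge_vertex u v b, merge_vertex u v c)
        \<in> restrict_arcs (W - {v}) (contract_arcs u v A)"
      using restrict_contract_arcs[OF assms(1-3)] step.hyps(2) by blast
    with step.IH show ?thesis by (rule rtrancl.rtrancl_into_rtrancl)
  qed
qed simp

lemma restrict_contract_arcs_disjoint:
  assumes "u \<notin> X" "v \<notin> X" "acyclic A"
  shows "restrict_arcs X (contract_arcs u v A) = restrict_arcs X A"
proof
  show "restrict_arcs X (contract_arcs u v A) \<subseteq> restrict_arcs X A"
    using assms(1) unfolding restrict_arcs_def contract_arcs_def merge_vertex_def by auto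
  show "restrict_arcs X A \<subseteq> restrict_arcs X (contract_arcs u v A)"
  proof
    fix p assume "p \<in> restrict_arcs X A"
    then obtain a b where ab: "p = (a, b)" "(a, b) \<in> A" "a \<in> X" "b \<in> X"
      unfolding restrict_arcs_def by blast
    have "a \<noteq> b" using ab(2) assms(3) unfolding acyclic_def by blast
    moreover have "merge_vertex u v a = a" "merge_vertex u v b = b"
      using ab assms(2) by (auto simp: merge_vertex_def)
    ultimately have "(a, b) \<in> contract_arcs u v A" using ab(2) unfolding contract_arcs_def by force
    then show "p \<in> restrict_arcs X (contract_arcs u v A)" using ab by (simp add: restrict_arcs_def)
  qed
qed

lemma is_source_contract_arcs:
  assumes "u \<in> W" "v \<in> W" "u \<noteq> v" "is_source W A s" "s \<noteq> u" "s \<noteq> v"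
  shows "is_source (W - {v}) (contract_arcs u v A) s"
  unfolding is_source_def
proof (intro conjI allI notI)
  show "s \<in> W - {v}" using assms(4,6) by (simp add: is_source_def)
  fix p assume "(p, s) \<in> restrict_arcs (W - {v}) (contract_arcs u v A)"
  then obtain a b where ab: "(a, b) \<in> restrict_arcs W A" "s = merge_vertex u v b"
    using restrict_contract_arcs[OF assms(1-3)] by blast
  have "b = s" using merge_vertex_eq_cases[OF ab(2)[symmetric]] assms(5) by blast
  then show False using ab(1) assms(4) by (simp add: is_source_def)
qed

lemma reach_contract_arcs:
  assumes "u \<in> W" "v \<in> W" "u \<noteq> v" "s \<in> W" and uR: "u \<notin> reach W A s" and "v \<notin> reach W A s"
  shows "reach (W - {v}) (contract_arcs u v A) s = reach W A s"
proof
  have "s \<noteq> v" using reach_self[OF assms(4)] assms(6) by blast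
  show "reach W A s \<subseteq> reach (W - {v}) (contract_arcs u v A) s"
  proof
    fix z assume z: "z \<in> reach W A s"
    then have "z \<noteq> v" using assms(6) by blast
    moreover have "(s, z) \<in> (restrict_arcs W A)\<^sup>*" using z by (simp add: reach_def)
    from rtrancl_contract_arcs[OF assms(1-3) this]
    have "(s, z) \<in> (restrict_arcs (W - {v}) (contract_arcs u v A))\<^sup>*"
      using \<open>z \<noteq> v\<close> \<open>s \<noteq> v\<close> by (simp add: merge_vertex_other)
    ultimately show "z \<in> reach (W - {v}) (contract_arcs u v A) s" using z by (simp add: reach_def)
  qed
  have "q \<in> reach W A s" if "(s, q) \<in> (restrict_arcs (W - {v}) (contract_arcs u v A))\<^sup>*" for q
    using that
  proof (induction rule: rtrancl_induct)
    case base
    then show ?case using reach_self[OF assms(4)] .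
  next
    case (step p q)
    obtain a b where ab: "(a, b) \<in> restrict_arcs W A"
        "p = merge_vertex u v a" "q = merge_vertex u v b"
      using step.hyps(2) restrict_contract_arcs[OF assms(1-3)] by blast
    have "p \<noteq> u" using step.IH uR by blast
    then have "a = p" using merge_vertex_eq_cases[OF ab(2)[symmetric]] by blast
    then have bR: "b \<in> reach W A s" using reach_arc[OF ab(1)] step.IH by simp
    then have "b \<noteq> v" using assms(6) by blast
    then show ?case using bR ab(3) by (simp add: merge_vertex_other)
  qed
  then show "reach (W - {v}) (contract_arcs u v A) s \<subseteq> reach W A s"
    unfolding reach_def[of "W - {v}"] by blast
qed

lemma arc_closed_contract_arcs:
  assumes "u \<in> W" "v \<in> W" "u \<noteq> v" "arc_closed W A P"
    and "\<And>x. x \<in> W \<Longrightarrow> merge_vertex u v x \<in> Q \<longleftrightarrow> x \<in> P"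
  shows "arc_closed (W - {v}) (contract_arcs u v A) Q"
  unfolding arc_closed_def
proof (intro allI impI)
  fix p q assume "(p, q) \<in> restrict_arcs (W - {v}) (contract_arcs u v A)"
  then obtain a b where ab: "(a, b) \<in> restrict_arcs W A"
      "p = merge_vertex u v a" "q = merge_vertex u v b"
    using restrict_contract_arcs[OF assms(1-3)] by blast
  moreover have "a \<in> W" "b \<in> W" using ab(1) by (auto simp: restrict_arcs_def)
  ultimately show "p \<in> Q \<longleftrightarrow> q \<in> Q" using assms(4,5) unfolding arc_closed_def by metis
qed

lemma pred_closed_contract_arcs_remainder:
  fixes u v s s' :: 'a and W :: "'a set" and A :: "('a \<times> 'a) set"
  defines "R \<equiv> reach W A s" and "R' \<equiv> reach (W - {v}) (contract_arcs u v A) s'"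
  assumes uv: "u \<in> W" "v \<in> W" "u \<noteq> v" and sv: "s \<noteq> v" and vR: "v \<in> R"
    and s': "(s', s) \<in> (restrict_arcs (W - {v}) (contract_arcs u v A))\<^sup>*"
  shows "pred_closed (W - R) A (W - {v} - R')" "u \<in> R'"
proof -
  have merge_R: "merge_vertex u v z \<in> R'" if z: "z \<in> R" for z
  proof -
    have "(s, z) \<in> (restrict_arcs W A)\<^sup>*" using z by (simp add: R_def reach_def)
    from rtrancl_contract_arcs[OF uv this]
    have "(s, merge_vertex u v z) \<in> (restrict_arcs (W - {v}) (contract_arcs u v A))\<^sup>*"
      using sv by (simp add: merge_vertex_other)
    with s' have "(s', merge_vertex u v z) \<in> (restrict_arcs (W - {v}) (contract_arcs u v A))\<^sup>*"
      by (rule rtrancl_trans)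
    moreover have "merge_vertex u v z \<in> W - {v}"
      using z merge_vertex_in[of z W u v] uv(1) merge_vertex_neq[OF uv(3)]
      by (auto simp: R_def reach_def)
    ultimately show ?thesis by (simp add: R'_def reach_def)
  qed
  show "u \<in> R'" using merge_R[OF vR] by (simp add: merge_vertex_merged)
  show "pred_closed (W - R) A (W - {v} - R')"
    unfolding pred_closed_def
  proof (intro conjI allI impI)
    show "W - {v} - R' \<subseteq> W - R"
      using merge_R merge_vertex_other by fastforce
    fix a b assume ab: "(a, b) \<in> restrict_arcs (W - R) A" "b \<in> W - {v} - R'"
    show "a \<in> W - {v} - R'"
    proof (rule ccontr)
      assume "a \<notin> W - {v} - R'"
      moreover have "a \<in> W" "a \<noteq> v" using ab(1) vR by (auto simp: restrict_arcs_def)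
      ultimately have "a \<in> R'" by blast
      have "a \<noteq> b" "b \<noteq> v" using ab(2) \<open>a \<in> R'\<close> by auto
      then have "(a, b) \<in> contract_arcs u v A"
        using ab(1) \<open>a \<noteq> v\<close> unfolding contract_arcs_def restrict_arcs_def
        by (force simp: merge_vertex_other)
      then have "(a, b) \<in> restrict_arcs (W - {v}) (contract_arcs u v A)"
        using ab \<open>a \<in> W\<close> \<open>a \<noteq> v\<close> by (simp add: restrict_arcs_def)
      then have "b \<in> R'" using \<open>a \<in> R'\<close> unfolding R'_def by (rule reach_arc)
      then show False using ab(2) by blast
    qed
  qed
qed

lemma elim_depth_contract_arcs_reached:
  assumes fin: "finite W" and acyc: "acyclic A" "acyclic (contract_arcs u v A)"
    and uv: "u \<in> W" "v \<in> W" "u \<noteq> v" and arc: "(u, v) \<in> A"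
    and s: "is_source W A s" "v \<in> reach W A s"
    and rest: "elim_depth (W - reach W A s) A d"
  shows "\<exists>e\<le>Suc d. elim_depth (W - {v}) (contract_arcs u v A) e"
proof -
  let ?V = "W - {v}"
  let ?B = "contract_arcs u v A"
  have sv: "s \<noteq> v" and sV: "s \<in> ?V"
    using s(1) uv arc by (auto simp: is_source_def restrict_arcs_def)
  obtain s' where s': "is_source ?V ?B s'" "s \<in> reach ?V ?B s'"
    using exists_source_reaching[OF _ acyc(2) sV] fin by blast
  let ?X = "?V - reach ?V ?B s'"
  have "(s', s) \<in> (restrict_arcs ?V ?B)\<^sup>*" using s'(2) by (simp add: reach_def)
  note remainder = pred_closed_contract_arcs_remainder[OF uv sv s(2) this]
  obtain e where e: "e \<le> d" "elim_depth ?X A e"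
    using elim_depth_pred_closed[OF rest _ acyc(1) remainder(1)] fin by blast
  have "restrict_arcs ?X ?B = restrict_arcs ?X A"
    using remainder(2) by (intro restrict_contract_arcs_disjoint[OF _ _ acyc(1)]) auto
  then have "elim_depth ?X ?B e" using elim_depth_cong[OF e(2)] by simp
  from elim_depth_remove_reach[OF _ s'(1) this] fin
  obtain e' where "e' \<le> Suc e" "elim_depth ?V ?B e'" by blast
  then show ?thesis using e(1) by (intro exI[of _ e']) simp
qed

lemma elim_depth_contract_arcs_components:
  assumes fin: "finite W" and uv: "u \<in> W" "v \<in> W" "u \<noteq> v" "(u, v) \<in> A" and acyc: "acyclic A"
    and parts: "\<And>C. C \<in> components W A \<Longrightarrow> elim_depth C A (d C)"
    and merged: "\<And>C. C \<in> components W A \<Longrightarrow> u \<in> C \<Longrightarrow> v \<in> C \<Longrightarrow>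
      \<exists>e\<le>d C. elim_depth (C - {v}) (contract_arcs u v A) e"
  shows "\<exists>e\<le>Max (d ` components W A). elim_depth (W - {v}) (contract_arcs u v A) e"
proof (rule elim_depth_partition_Max)
  let ?B = "contract_arcs u v A"
  show "finite (W - {v})" using fin by simp
  show "finite (components W A)" using fin by (rule finite_components)
  show "(\<Union>C\<in>components W A. C - {v}) = W - {v}" using Union_components[of W A] by blast
  fix C assume C: "C \<in> components W A"
  have uC_vC: "u \<in> C \<longleftrightarrow> v \<in> C"
    using components_arc_closed[OF C] uv unfolding arc_closed_def restrict_arcs_def by blast
  have "arc_closed (W - {v}) ?B (C - {v})"
  proof (rule arc_closed_contract_arcs[OF uv(1-3) components_arc_closed[OF C]])
    show "merge_vertex u v x \<in> C - {v} \<longleftrightarrow> x \<in> C" if "x \<in> W" for x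
      using uC_vC uv(3) by (auto simp: merge_vertex_def)
  qed
  moreover have "\<exists>e\<le>d C. elim_depth (C - {v}) ?B e"
  proof (cases "u \<in> C")
    case True
    then show ?thesis using merged[OF C] uC_vC by blast
  next
    case False
    then have "v \<notin> C" using uC_vC by blast
    then have "restrict_arcs C A = restrict_arcs C ?B"
      using restrict_contract_arcs_disjoint[OF False _ acyc] by blast
    with parts[OF C] have "elim_depth C ?B (d C)" by (rule elim_depth_cong)
    then show ?thesis using \<open>v \<notin> C\<close> by auto
  qed
  ultimately show "arc_closed (W - {v}) ?B (C - {v}) \<and> C - {v} \<subseteq> W - {v}
      \<and> (\<exists>e\<le>d C. elim_depth (C - {v}) ?B e)"
    using components_subset[OF C] by blast
qed

lemma elim_depth_contract_arcs_unreached: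
  assumes fin: "finite W" and uv: "u \<in> W" "v \<in> W" "u \<noteq> v"
    and s: "is_source W A s" "u \<notin> reach W A s" "v \<notin> reach W A s"
    and rest: "elim_depth (W - reach W A s - {v}) (contract_arcs u v A) e"
  shows "\<exists>e'\<le>Suc e. elim_depth (W - {v}) (contract_arcs u v A) e'"
proof -
  have sW: "s \<in> W" using s(1) by (simp add: is_source_def)
  have "s \<noteq> u" "s \<noteq> v" using reach_self[OF sW] s(2,3) by blast+
  then have src: "is_source (W - {v}) (contract_arcs u v A) s"
    by (intro is_source_contract_arcs[OF uv s(1)])
  have "W - {v} - reach (W - {v}) (contract_arcs u v A) s = W - reach W A s - {v}"
    using reach_contract_arcs[OF uv sW s(2,3)] by blast
  with rest have
    "elim_depth (W - {v} - reach (W - {v}) (contract_arcs u v A) s) (contract_arcs u v A) e"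
    by simp
  with fin src show ?thesis using elim_depth_remove_reach[of "W - {v}"] by simp
qed

lemma elim_depth_contract_arcs:
  "elim_depth W A d \<Longrightarrow> acyclic A \<Longrightarrow> acyclic (contract_arcs u v A) \<Longrightarrow> (u, v) \<in> A \<Longrightarrow> u \<noteq> v \<Longrightarrow>
   finite W \<Longrightarrow> u \<in> W \<Longrightarrow> v \<in> W \<Longrightarrow> \<exists>e\<le>d. elim_depth (W - {v}) (contract_arcs u v A) e"
proof (induction rule: elim_depth.induct)
  case (empty A)
  then show ?case by simp
next
  case (disconn W A d)
  show ?case
  proof (rule elim_depth_contract_arcs_components[OF disconn.prems(5,6,7,4,3,1)])
    fix C assume C: "C \<in> components W A"
    show "elim_depth C A (d C)" using disconn.IH C by blast
    assume "u \<in> C" "v \<in> C"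
    moreover have "finite C" using components_subset[OF C] disconn.prems(5) by (rule finite_subset)
    ultimately show "\<exists>e\<le>d C. elim_depth (C - {v}) (contract_arcs u v A) e"
      using disconn.IH C disconn.prems(1-4) by blast
  qed
next
  case (one_source W A s)
  let ?V = "W - {v}"
  let ?B = "contract_arcs u v A"
  have sv: "s \<noteq> v" using one_source.hyps(2) one_source.prems(3,6,7)
    by (auto simp: is_source_def restrict_arcs_def)
  have sV: "s \<in> ?V" using one_source.hyps(2) sv by (simp add: is_source_def)
  have reached: "?V \<subseteq> reach ?V ?B s"
  proof
    fix y assume y: "y \<in> ?V"
    obtain s1 where "is_source W A s1" "y \<in> reach W A s1"
      using exists_source_reaching[OF one_source.prems(5,1)] y by blast
    then have "(s, y) \<in> (restrict_arcs W A)\<^sup>*" using one_source.hyps(3) by (simp add: reach_def)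
    from rtrancl_contract_arcs[OF one_source.prems(6,7,4) this]
    show "y \<in> reach ?V ?B s" using sv y by (simp add: merge_vertex_other reach_def)
  qed
  have "is_source ?V ?B s" by (rule is_source_if_reaches_all[OF one_source.prems(2) sV reached])
  then show ?case using elim_depth_le_one[OF _ _ reached] one_source.prems(5) by simp
next
  case (many_sources W A s t d)
  let ?R = "reach W A s"
  show ?case
  proof (cases "v \<in> ?R")
    case True
    then show ?thesis
      using elim_depth_contract_arcs_reached[OF many_sources.prems(5,1,2,6,7,4,3)
          many_sources.hyps(2) True many_sources.hyps(5)] by blast
  next
    case False
    have "(u, v) \<in> restrict_arcs W A"
      using many_sources.prems(3,6,7) by (simp add: restrict_arcs_def)
    then have "u \<notin> ?R" using False reach_arc[of u v W A s] by blast
    then obtain e where e: "e \<le> d" "elim_depth (W - ?R - {v}) (contract_arcs u v A) e"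
      using many_sources.IH many_sources.prems(1-4) many_sources.prems(5,6,7) False by blast
    from elim_depth_contract_arcs_unreached[OF many_sources.prems(5-7,4) many_sources.hyps(2)
        \<open>u \<notin> ?R\<close> False e(2)]
    obtain e' where "e' \<le> Suc e" "elim_depth (W - {v}) (contract_arcs u v A) e'" by blast
    then show ?thesis using e(1) by (intro exI[of _ e']) simp
  qed
qed

section \<open>Relabelling vertices\<close>

definition map_arcs :: "('a \<Rightarrow> 'b) \<Rightarrow> ('a \<times> 'a) set \<Rightarrow> ('b \<times> 'b) set" where
  "map_arcs h A = {(h a, h b) | a b. (a, b) \<in> A}"

lemma map_arcs_Un_converse: "map_arcs h (R \<union> R\<inverse>) = map_arcs h R \<union> (map_arcs h R)\<inverse>"
  unfolding map_arcs_def by blast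

lemma map_arcs_inverse:
  assumes "\<And>a. a \<in> V \<Longrightarrow> g (f a) = a" "R \<subseteq> V \<times> V"
  shows "map_arcs g (map_arcs f R) = R"
  using assms unfolding map_arcs_def by (auto simp: subset_iff) force

context
  fixes h :: "'a \<Rightarrow> 'b" and V :: "'a set"
  assumes inj: "inj_on h V"
begin

lemma map_arcs_iff:
  assumes "R \<subseteq> V \<times> V" "a \<in> V" "b \<in> V"
  shows "(h a, h b) \<in> map_arcs h R \<longleftrightarrow> (a, b) \<in> R"
  using assms inj unfolding map_arcs_def by (auto simp: inj_on_eq_iff)

lemma rtrancl_map_arcs:
  assumes "R \<subseteq> V \<times> V" "x \<in> V" "y \<in> V"
  shows "(h x, h y) \<in> (map_arcs h R)\<^sup>* \<longleftrightarrow> (x, y) \<in> R\<^sup>*"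
proof
  have "\<exists>y\<in>V. q = h y \<and> (x, y) \<in> R\<^sup>*" if "(h x, q) \<in> (map_arcs h R)\<^sup>*" for q
    using that
  proof (induction rule: rtrancl_induct)
    case (step q r)
    then obtain y where y: "y \<in> V" "q = h y" "(x, y) \<in> R\<^sup>*" by blast
    obtain a b where ab: "q = h a" "r = h b" "(a, b) \<in> R"
      using step.hyps(2) unfolding map_arcs_def by blast
    have "a \<in> V" "b \<in> V" using ab(3) assms(1) by auto
    then have "a = y" using inj y(1,2) ab(1) by (simp add: inj_on_eq_iff)
    then show ?case using y(3) ab(2,3) \<open>b \<in> V\<close> by (auto intro: rtrancl.rtrancl_into_rtrancl)
  qed (use assms(2) in blast)
  moreover assume "(h x, h y) \<in> (map_arcs h R)\<^sup>*"
  ultimately obtain y' where "y' \<in> V" "h y = h y'" "(x, y') \<in> R\<^sup>*" by blast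
  then show "(x, y) \<in> R\<^sup>*" using inj assms(3) by (simp add: inj_on_eq_iff)
next
  assume "(x, y) \<in> R\<^sup>*"
  then show "(h x, h y) \<in> (map_arcs h R)\<^sup>*"
  proof (induction rule: rtrancl_induct)
    case (step y z)
    then have "(h y, h z) \<in> map_arcs h R" unfolding map_arcs_def by blast
    with step.IH show ?case by (rule rtrancl.rtrancl_into_rtrancl)
  qed simp
qed

lemma acyclic_map_arcs:
  assumes "R \<subseteq> V \<times> V" "acyclic R"
  shows "acyclic (map_arcs h R)"
  unfolding acyclic_def
proof (intro allI notI)
  fix p assume "(p, p) \<in> (map_arcs h R)\<^sup>+"
  then obtain c where c: "(p, c) \<in> map_arcs h R" "(c, p) \<in> (map_arcs h R)\<^sup>*"
    by (blast dest: tranclD)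
  from c(1) obtain a b where ab: "p = h a" "c = h b" "(a, b) \<in> R"
    unfolding map_arcs_def by blast
  have "a \<in> V" "b \<in> V" using ab(3) assms(1) by auto
  then have "(b, a) \<in> R\<^sup>*" using c(2) ab rtrancl_map_arcs[OF assms(1)] by simp
  with ab(3) have "(a, a) \<in> R\<^sup>+" by (rule rtrancl_into_trancl2)
  then show False using assms(2) unfolding acyclic_def by blast
qed

lemma image_rtrancl_map_arcs:
  assumes "W \<subseteq> V" "x \<in> W" "R \<subseteq> W \<times> W"
  shows "{w \<in> h ` W. (h x, w) \<in> (map_arcs h R)\<^sup>*} = h ` {w \<in> W. (x, w) \<in> R\<^sup>*}"
proof -
  have "(h x, h w) \<in> (map_arcs h R)\<^sup>* \<longleftrightarrow> (x, w) \<in> R\<^sup>*" if "w \<in> W" for w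
    using rtrancl_map_arcs[of R x w] assms that by blast
  then show ?thesis by auto
qed

context
  fixes A :: "('a \<times> 'a) set"
  assumes arcs: "A \<subseteq> V \<times> V"
begin

lemma restrict_arcs_map_arcs:
  assumes "W \<subseteq> V"
  shows "restrict_arcs (h ` W) (map_arcs h A) = map_arcs h (restrict_arcs W A)"
proof
  show "restrict_arcs (h ` W) (map_arcs h A) \<subseteq> map_arcs h (restrict_arcs W A)"
  proof
    fix p assume "p \<in> restrict_arcs (h ` W) (map_arcs h A)"
    then obtain a b where ab: "p = (h a, h b)" "(a, b) \<in> A" "h a \<in> h ` W" "h b \<in> h ` W"
      unfolding restrict_arcs_def map_arcs_def by blast
    have "a \<in> V" "b \<in> V" using ab(2) arcs by auto
    then have "a \<in> W" "b \<in> W" using ab(3,4) inj assms by (auto simp: inj_on_eq_iff)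
    then show "p \<in> map_arcs h (restrict_arcs W A)"
      using ab unfolding map_arcs_def restrict_arcs_def by blast
  qed
  show "map_arcs h (restrict_arcs W A) \<subseteq> restrict_arcs (h ` W) (map_arcs h A)"
    unfolding map_arcs_def restrict_arcs_def by blast
qed

lemma is_source_map_arcs:
  assumes "W \<subseteq> V" "s \<in> W"
  shows "is_source (h ` W) (map_arcs h A) (h s) \<longleftrightarrow> is_source W A s"
proof -
  have "(\<exists>p. (p, h s) \<in> map_arcs h (restrict_arcs W A)) \<longleftrightarrow> (\<exists>p. (p, s) \<in> restrict_arcs W A)"
  proof
    assume "\<exists>p. (p, h s) \<in> map_arcs h (restrict_arcs W A)"
    then obtain a b where ab: "h b = h s" "(a, b) \<in> restrict_arcs W A"
      unfolding map_arcs_def by fastforce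
    moreover have "b \<in> V" "s \<in> V" using ab(2) assms by (auto simp: restrict_arcs_def)
    ultimately have "b = s" using inj by (simp add: inj_on_eq_iff)
    then show "\<exists>p. (p, s) \<in> restrict_arcs W A" using ab(2) by blast
  qed (auto simp: map_arcs_def)
  then show ?thesis
    unfolding is_source_def restrict_arcs_map_arcs[OF assms(1)] using assms(2) by blast
qed

lemma reach_map_arcs:
  assumes "W \<subseteq> V" "s \<in> W"
  shows "reach (h ` W) (map_arcs h A) (h s) = h ` reach W A s"
  unfolding reach_def restrict_arcs_map_arcs[OF assms(1)]
  by (rule image_rtrancl_map_arcs[OF assms]) (auto simp: restrict_arcs_def)

lemma component_map_arcs:
  assumes "W \<subseteq> V" "x \<in> W"
  shows "component (h ` W) (map_arcs h A) (h x) = h ` component W A x"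
  unfolding component_def restrict_arcs_map_arcs[OF assms(1)] map_arcs_Un_converse[symmetric]
  by (rule image_rtrancl_map_arcs[OF assms]) (auto simp: restrict_arcs_def)

lemma components_map_arcs:
  assumes "W \<subseteq> V"
  shows "components (h ` W) (map_arcs h A) = (\<lambda>C. h ` C) ` components W A"
proof -
  have "components (h ` W) (map_arcs h A) = (\<lambda>x. component (h ` W) (map_arcs h A) (h x)) ` W"
    unfolding components_def by (simp add: image_comp comp_def)
  also have "\<dots> = (\<lambda>C. h ` C) ` components W A"
    using component_map_arcs[OF assms] unfolding components_def by (simp add: image_comp comp_def)
  finally show ?thesis .
qed

lemma uconnected_map_arcs:
  assumes "W \<subseteq> V"
  shows "uconnected (h ` W) (map_arcs h A) \<longleftrightarrow> uconnected W A"
proof -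
  have "h ` component W A x = h ` W \<longleftrightarrow> component W A x = W" for x
    using inj_on_subset[OF inj assms] component_subset by (rule inj_on_image_eq_iff) simp
  then show ?thesis
    unfolding uconnected_def using component_map_arcs[OF assms] by simp
qed

end

end

lemma elim_depth_map_arcs:
  "elim_depth W A d \<Longrightarrow> inj_on h V \<Longrightarrow> A \<subseteq> V \<times> V \<Longrightarrow> W \<subseteq> V \<Longrightarrow>
   elim_depth (h ` W) (map_arcs h A) d"
proof (induction rule: elim_depth.induct)
  case (empty A)
  show ?case using elim_depth.empty by simp
next
  case (disconn W A d)
  note comps = components_map_arcs[OF disconn.prems]
  have injW: "inj_on h W" using disconn.prems(1,3) by (rule inj_on_subset)
  define d' where "d' = (\<lambda>C'. d (inv_into W h ` C'))"
  have d'C: "d' (h ` C) = d C" if "C \<in> components W A" for C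
    using components_subset[OF that] injW unfolding d'_def by simp
  have parts: "\<forall>C'\<in>components (h ` W) (map_arcs h A). elim_depth C' (map_arcs h A) (d' C')"
  proof
    fix C' assume "C' \<in> components (h ` W) (map_arcs h A)"
    then obtain C where C: "C \<in> components W A" "C' = h ` C" using comps by blast
    have "C \<subseteq> V" using components_subset[OF C(1)] disconn.prems(3) by blast
    then have "elim_depth (h ` C) (map_arcs h A) (d C)"
      using bspec[OF disconn.IH C(1)] disconn.prems(1,2) by simp
    then show "elim_depth C' (map_arcs h A) (d' C')" using C d'C by simp
  qed
  have "\<not> uconnected (h ` W) (map_arcs h A)"
    using disconn.hyps(2) uconnected_map_arcs[OF disconn.prems] by simp
  moreover have "h ` W \<noteq> {}" using disconn.hyps(1) by simp
  ultimately have "elim_depth (h ` W) (map_arcs h A) (Max (d' ` components (h ` W) (map_arcs h A)))"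
    using parts by (intro elim_depth.disconn)
  moreover have "d' ` components (h ` W) (map_arcs h A) = d ` components W A"
    unfolding comps image_comp comp_def using d'C by simp
  ultimately show ?case by simp
next
  case (one_source W A s)
  have sW: "s \<in> W" using one_source.hyps(2) by (simp add: is_source_def)
  have "uconnected (h ` W) (map_arcs h A)"
    using one_source.hyps(1) uconnected_map_arcs[OF one_source.prems] by simp
  moreover have "is_source (h ` W) (map_arcs h A) (h s)"
    using one_source.hyps(2) is_source_map_arcs[OF one_source.prems sW] by simp
  moreover have "\<forall>t'. is_source (h ` W) (map_arcs h A) t' \<longrightarrow> t' = h s"
  proof (intro allI impI)
    fix t' assume t': "is_source (h ` W) (map_arcs h A) t'"
    then obtain t where t: "t \<in> W" "t' = h t" by (auto simp: is_source_def)
    then have "is_source W A t" using t' is_source_map_arcs[OF one_source.prems t(1)] by simp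
    then show "t' = h s" using one_source.hyps(3) t(2) by simp
  qed
  ultimately show ?case by (rule elim_depth.one_source)
next
  case (many_sources W A s t d)
  have sW: "s \<in> W" and tW: "t \<in> W" using many_sources.hyps(2,3) by (simp_all add: is_source_def)
  have injW: "inj_on h W" using many_sources.prems(1,3) by (rule inj_on_subset)
  have "uconnected (h ` W) (map_arcs h A)"
    using many_sources.hyps(1) uconnected_map_arcs[OF many_sources.prems] by simp
  moreover have "is_source (h ` W) (map_arcs h A) (h s)" "is_source (h ` W) (map_arcs h A) (h t)"
    using many_sources.hyps(2,3) is_source_map_arcs[OF many_sources.prems] sW tW by simp_all
  moreover have "h t \<noteq> h s" using many_sources.hyps(4) injW sW tW by (auto simp: inj_on_eq_iff)
  moreover have "h ` W - reach (h ` W) (map_arcs h A) (h s) = h ` (W - reach W A s)"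
    unfolding reach_map_arcs[OF many_sources.prems sW]
    by (rule inj_on_image_set_diff[OF injW, symmetric]) (auto simp: reach_def)
  moreover have "elim_depth (h ` (W - reach W A s)) (map_arcs h A) d"
    using many_sources.IH many_sources.prems by blast
  ultimately show ?case using elim_depth.many_sources by metis
qed

section \<open>Acyclic orientations of graphs and their minors\<close>

lemma ugraph_edge: "ugraph V E \<Longrightarrow> {a, b} \<in> E \<Longrightarrow> a \<in> V \<and> b \<in> V \<and> a \<noteq> b"
  unfolding ugraph_def by (auto simp: doubleton_eq_iff)

lemma acyclic_orientation_acyclic: "acyclic_orientation V E A \<Longrightarrow> acyclic A"
  unfolding acyclic_orientation_def by blast

lemma acyclic_orientation_edge: "acyclic_orientation V E A \<Longrightarrow> (a, b) \<in> A \<Longrightarrow> {a, b} \<in> E"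
  unfolding acyclic_orientation_def by blast

lemma acyclic_orientation_iff:
  "acyclic_orientation V E A \<Longrightarrow> {a, b} \<in> E \<Longrightarrow> a \<noteq> b \<Longrightarrow> (a, b) \<in> A \<longleftrightarrow> (b, a) \<notin> A"
  unfolding acyclic_orientation_def by blast

lemma acyclic_orientation_subset:
  "ugraph V E \<Longrightarrow> acyclic_orientation V E A \<Longrightarrow> A \<subseteq> V \<times> V"
  using ugraph_edge acyclic_orientation_edge by fast

lemma finite_acyclic_orientations:
  assumes "ugraph V E"
  shows "finite {A. acyclic_orientation V E A}"
proof (rule finite_subset)
  show "{A. acyclic_orientation V E A} \<subseteq> Pow (V \<times> V)"
    using acyclic_orientation_subset[OF assms] by blast
  show "finite (Pow (V \<times> V))" using assms by (simp add: ugraph_def)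
qed

lemma acyclic_orientation_exists:
  assumes "ugraph V E"
  shows "\<exists>A. acyclic_orientation V E A"
proof -
  have "finite V" using assms by (simp add: ugraph_def)
  then obtain g :: "'a \<Rightarrow> nat" where g: "inj_on g V"
    using finite_imp_inj_to_nat_seg by meson
  define A where "A = {(a, b). {a, b} \<in> E \<and> g a < g b}"
  have "A \<subseteq> inv_image less_than g" unfolding A_def by auto
  moreover have "acyclic (inv_image less_than g)"
    by (rule wf_acyclic) (rule wf_inv_image[OF wf_less_than])
  ultimately have "acyclic A" by (rule acyclic_subset[rotated])
  moreover have "(a, b) \<in> A \<longleftrightarrow> (b, a) \<notin> A" if ab: "{a, b} \<in> E" "a \<noteq> b" for a b
  proof -
    have "g a \<noteq> g b" using ugraph_edge[OF assms ab(1)] g ab(2) by (auto simp: inj_on_eq_iff)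
    then show ?thesis using ab(1) by (auto simp: A_def insert_commute)
  qed
  moreover have "A \<subseteq> {(a, b). {a, b} \<in> E}" unfolding A_def by blast
  ultimately have "acyclic_orientation V E A" unfolding acyclic_orientation_def by blast
  then show ?thesis by blast
qed

fun dtd_dominated :: "'b set \<times> 'b set set \<Rightarrow> 'a set \<times> 'a set set \<Rightarrow> bool" where
  "dtd_dominated (V1, E1) (V2, E2) \<longleftrightarrow> (\<forall>B. acyclic_orientation V1 E1 B \<longrightarrow>
     (\<exists>A. acyclic_orientation V2 E2 A \<and> dag_dtd V1 B \<le> dag_dtd V2 A))"

lemma dtd_dominated_refl: "dtd_dominated G G"
  by (cases G) auto

lemma dtd_dominated_trans: "dtd_dominated G1 G2 \<Longrightarrow> dtd_dominated G2 G3 \<Longrightarrow> dtd_dominated G1 G3"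
  by (cases G1; cases G2; cases G3) (simp, meson le_trans)

lemma dtd_le_if_dominated:
  assumes "ugraph V1 E1" "ugraph V2 E2" "dtd_dominated (V1, E1) (V2, E2)"
  shows "dtd V1 E1 \<le> dtd V2 E2"
proof -
  have dtd_eq: "dtd V E = Max (dag_dtd V ` {A. acyclic_orientation V E A})" for V :: "'c set" and E
    unfolding dtd_def by (simp add: setcompr_eq_image)
  have "dtd V1 E1 \<in> dag_dtd V1 ` {B. acyclic_orientation V1 E1 B}"
    unfolding dtd_eq
    using finite_acyclic_orientations[OF assms(1)] acyclic_orientation_exists[OF assms(1)]
    by (intro Max_in) auto
  then obtain B where B: "acyclic_orientation V1 E1 B" "dtd V1 E1 = dag_dtd V1 B" by blast
  then obtain A where A: "acyclic_orientation V2 E2 A" "dag_dtd V1 B \<le> dag_dtd V2 A"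
    using assms(3) by auto
  have "dag_dtd V2 A \<le> dtd V2 E2"
    unfolding dtd_eq using finite_acyclic_orientations[OF assms(2)] A(1) by (intro Max_ge) auto
  then show ?thesis using A(2) B(2) by simp
qed

lemma ugraph_delete_vertex: "ugraph V E \<Longrightarrow> ugraph (V - {x}) {e \<in> E. x \<notin> e}"
  unfolding ugraph_def by blast

lemma acyclic_Un_arcs_into_sink:
  assumes "acyclic B" "\<And>p q. (p, q) \<in> B \<Longrightarrow> p \<noteq> x" "\<And>p q. (p, q) \<in> S \<Longrightarrow> q = x \<and> p \<noteq> x"
  shows "acyclic (B \<union> S)"
proof -
  have path: "(a, b) \<in> B\<^sup>+ \<or> b = x" if "(a, b) \<in> (B \<union> S)\<^sup>+" for a b
    using that
  proof (induction rule: trancl_induct)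
    case (step y z)
    from step.hyps(2) show ?case
    proof
      assume yz: "(y, z) \<in> B"
      then have "(a, y) \<in> B\<^sup>+" using step.IH assms(2) by blast
      then show ?case using yz by (simp add: trancl_into_trancl)
    qed (use assms(3) in blast)
  qed (use assms(3) in blast)
  show ?thesis
    unfolding acyclic_def
  proof (intro allI notI)
    fix a assume cycle: "(a, a) \<in> (B \<union> S)\<^sup>+"
    from path[OF this] show False
    proof
      assume "(a, a) \<in> B\<^sup>+"
      then show False using assms(1) unfolding acyclic_def by blast
    next
      assume "a = x"
      moreover obtain c where "(a, c) \<in> B \<union> S" using tranclD[OF cycle] by blast
      ultimately show False using assms(2,3) by blast
    qed
  qed
qed

lemma acyclic_orientation_add_sink:
  assumes ug: "ugraph V E" and B: "acyclic_orientation (V - {x}) {e \<in> E. x \<notin> e} B"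
  shows "acyclic_orientation V E (B \<union> {(w, x) | w. {w, x} \<in> E})"
proof -
  define S where "S = {(w, x) | w. {w, x} \<in> E}"
  have Bx: "p \<noteq> x \<and> q \<noteq> x \<and> {p, q} \<in> E" if "(p, q) \<in> B" for p q
    using acyclic_orientation_edge[OF B that] by auto
  have Sx: "q = x \<and> p \<noteq> x \<and> {p, q} \<in> E" if "(p, q) \<in> S" for p q
    using that ugraph_edge[OF ug] unfolding S_def by blast
  have acyc: "acyclic (B \<union> S)" using acyclic_orientation_acyclic[OF B]
  proof (rule acyclic_Un_arcs_into_sink)
    show "p \<noteq> x" if "(p, q) \<in> B" for p q using Bx[OF that] by simp
    show "q = x \<and> p \<noteq> x" if "(p, q) \<in> S" for p q using Sx[OF that] by simp
  qed
  have "(p, x) \<notin> B" "(x, q) \<notin> B" "(x, q) \<notin> S" for p q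
    using Bx Sx by blast+
  then have into_x: "(p, x) \<in> B \<union> S \<longleftrightarrow> {p, x} \<in> E" "(x, q) \<notin> B \<union> S" for p q
    unfolding S_def by auto
  have orient: "(a, b) \<in> B \<union> S \<longleftrightarrow> (b, a) \<notin> B \<union> S" if ab: "{a, b} \<in> E" "a \<noteq> b" for a b
  proof (cases "x \<in> {a, b}")
    case True
    then consider "a = x" | "b = x" by blast
    then show ?thesis
    proof cases
      case 1
      moreover have "{b, a} \<in> E" using ab(1) by (simp add: insert_commute)
      ultimately show ?thesis using into_x[of b] by simp
    next
      case 2
      then show ?thesis using into_x[of a] ab(1) by simp
    qed
  next
    case False
    then have "(a, b) \<in> B \<longleftrightarrow> (b, a) \<notin> B" using acyclic_orientation_iff[OF B] ab by simp
    then show ?thesis using False Sx by blast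
  qed
  have "B \<union> S \<subseteq> {(a, b). {a, b} \<in> E}" using Bx Sx by blast
  then show ?thesis unfolding acyclic_orientation_def S_def[symmetric] using orient acyc by blast
qed

lemma dtd_dominated_delete_vertex:
  assumes ug: "ugraph V E"
  shows "dtd_dominated (delete_vertex x (V, E)) (V, E)"
proof -
  have "\<exists>A. acyclic_orientation V E A \<and> dag_dtd (V - {x}) B \<le> dag_dtd V A"
    if B: "acyclic_orientation (V - {x}) {e \<in> E. x \<notin> e} B" for B
  proof -
    define A where "A = B \<union> {(w, x) | w. {w, x} \<in> E}"
    have ao: "acyclic_orientation V E A"
      unfolding A_def by (rule acyclic_orientation_add_sink[OF ug B])
    have acA: "acyclic A" by (rule acyclic_orientation_acyclic[OF ao])
    have finV: "finite V" using ug by (simp add: ugraph_def)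
    have B_x: "p \<noteq> x" "q \<noteq> x" if "(p, q) \<in> B" for p q
      using acyclic_orientation_edge[OF B that] by auto
    have "pred_closed V A (V - {x})"
      using B_x unfolding pred_closed_def A_def restrict_arcs_def by blast
    then obtain e where e: "e \<le> dag_dtd V A" "elim_depth (V - {x}) A e"
      using elim_depth_pred_closed[OF elim_depth_dag_dtd[OF finV acA] finV acA] by blast
    have "restrict_arcs (V - {x}) A = restrict_arcs (V - {x}) B"
      unfolding A_def restrict_arcs_def by blast
    with e(2) have "elim_depth (V - {x}) B e" by (rule elim_depth_cong)
    then have "dag_dtd (V - {x}) B \<le> e" by (rule dag_dtd_le)
    with e(1) have "dag_dtd (V - {x}) B \<le> dag_dtd V A" by (rule order_trans[rotated])
    then show ?thesis using ao by blast
  qed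
  then show ?thesis by (simp add: delete_vertex_def)
qed

definition contract_edges :: "'a \<Rightarrow> 'a \<Rightarrow> 'a set set \<Rightarrow> 'a set set" where
  "contract_edges u v E = {e \<in> E. v \<notin> e} \<union> {{u, w} | w. {v, w} \<in> E \<and> w \<noteq> u}"

lemma contract_edge_pair: "contract_edge u v (V, E) = (V - {v}, contract_edges u v E)"
  by (simp add: contract_edge_def contract_edges_def)

lemma ugraph_contract_edges:
  assumes "ugraph V E" "{u, v} \<in> E"
  shows "ugraph (V - {v}) (contract_edges u v E)"
  unfolding ugraph_def
proof (intro conjI subsetI)
  show "finite (V - {v})" using assms(1) by (simp add: ugraph_def)
  fix e assume "e \<in> contract_edges u v E"
  then consider "e \<in> E" "v \<notin> e" | w where "e = {u, w}" "{v, w} \<in> E" "w \<noteq> u"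
    unfolding contract_edges_def by blast
  then show "e \<in> {{a, b} |a b. a \<in> V - {v} \<and> b \<in> V - {v} \<and> a \<noteq> b}"
  proof cases
    case 1
    then show ?thesis using assms(1) unfolding ugraph_def by blast
  next
    case 2
    then show ?thesis using ugraph_edge[OF assms(1)] assms(2) by blast
  qed
qed

lemma merge_vertex_contract_edges:
  assumes "ugraph V E" "{a, b} \<in> E" "{a, b} \<noteq> {u, v}"
  shows "{merge_vertex u v a, merge_vertex u v b} \<in> contract_edges u v E
    \<and> merge_vertex u v a \<noteq> merge_vertex u v b"
proof -
  have "a \<noteq> b" using ugraph_edge[OF assms(1,2)] by blast
  consider "a = v" | "b = v" | "a \<noteq> v" "b \<noteq> v" by blast
  then show ?thesis
  proof cases
    case 1
    then have "b \<noteq> u" "b \<noteq> v" using assms(3) \<open>a \<noteq> b\<close> by auto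
    then show ?thesis using assms(2) 1 by (auto simp: contract_edges_def merge_vertex_def)
  next
    case 2
    then have "a \<noteq> u" "a \<noteq> v" using assms(3) \<open>a \<noteq> b\<close> by (auto simp: insert_commute)
    moreover have "{v, a} \<in> E" using assms(2) 2 by (simp add: insert_commute)
    ultimately show ?thesis
      using 2 by (auto simp: contract_edges_def merge_vertex_def insert_commute)
  next
    case 3
    then show ?thesis using assms(2) \<open>a \<noteq> b\<close> by (auto simp: contract_edges_def merge_vertex_def)
  qed
qed

definition lift_orientation :: "'a \<Rightarrow> 'a \<Rightarrow> 'a set set \<Rightarrow> ('a \<times> 'a) set \<Rightarrow> ('a \<times> 'a) set" where
  "lift_orientation u v E B = insert (u, v)
     {(a, b). {a, b} \<in> E \<and> {a, b} \<noteq> {u, v} \<and> (merge_vertex u v a, merge_vertex u v b) \<in> B}"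

lemma acyclic_lift_orientation:
  assumes "acyclic B" "u \<noteq> v"
  shows "acyclic (lift_orientation u v E B)"
proof -
  let ?m = "merge_vertex u v"
  have path: "(?m a, ?m b) \<in> B\<^sup>+ \<or> (a = u \<and> b = v)"
    if "(a, b) \<in> (lift_orientation u v E B)\<^sup>+" for a b
    using that
  proof (induction rule: trancl_induct)
    case (base y)
    then show ?case unfolding lift_orientation_def by blast
  next
    case (step y z)
    have mu: "?m u = u" "?m v = u" using assms(2) by (simp_all add: merge_vertex_def)
    from step.hyps(2) consider "y = u" "z = v" | "(?m y, ?m z) \<in> B"
      unfolding lift_orientation_def by blast
    then show ?case
    proof cases
      case 1
      then show ?thesis using step.IH mu assms(2) by auto
    next
      case 2
      from step.IH show ?thesis
        using 2 mu by (auto intro: trancl_into_trancl)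
    qed
  qed
  show ?thesis using path assms unfolding acyclic_def by blast
qed

context
  fixes V :: "'a set" and E :: "'a set set" and u v :: 'a and B :: "('a \<times> 'a) set"
  assumes ug: "ugraph V E" and uv: "{u, v} \<in> E"
    and B: "acyclic_orientation (V - {v}) (contract_edges u v E) B"
begin

lemma acyclic_orientation_lift_orientation: "acyclic_orientation V E (lift_orientation u v E B)"
  unfolding acyclic_orientation_def
proof (intro conjI allI impI)
  have "u \<noteq> v" using ugraph_edge[OF ug uv] by blast
  show "lift_orientation u v E B \<subseteq> {(a, b). {a, b} \<in> E}"
    using uv unfolding lift_orientation_def by blast
  show "acyclic (lift_orientation u v E B)"
    by (rule acyclic_lift_orientation[OF acyclic_orientation_acyclic[OF B] \<open>u \<noteq> v\<close>])
  fix a b assume ab: "{a, b} \<in> E" "a \<noteq> b"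
  show "(a, b) \<in> lift_orientation u v E B \<longleftrightarrow> (b, a) \<notin> lift_orientation u v E B"
  proof (cases "{a, b} = {u, v}")
    case True
    then show ?thesis using \<open>u \<noteq> v\<close> ab(2)
      by (auto simp: lift_orientation_def doubleton_eq_iff)
  next
    case False
    then have "{b, a} \<noteq> {u, v}" "{b, a} \<in> E" using ab(1) by (simp_all add: insert_commute)
    moreover note merged = merge_vertex_contract_edges[OF ug ab(1) False]
    ultimately show ?thesis
      using False acyclic_orientation_iff[OF B merged[THEN conjunct1] merged[THEN conjunct2]] ab(1)
      by (auto simp: lift_orientation_def)
  qed
qed

lemma contract_arcs_lift_orientation_subset: "contract_arcs u v (lift_orientation u v E B) \<subseteq> B"
  unfolding contract_arcs_def lift_orientation_def by (auto simp: merge_vertex_def)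

lemma lift_orientation_preimage:
  assumes pq: "(p, q) \<in> B"
  obtains a b where "(a, b) \<in> lift_orientation u v E B"
    "p = merge_vertex u v a" "q = merge_vertex u v b"
proof -
  from acyclic_orientation_edge[OF B pq] consider "{p, q} \<in> E" "v \<notin> {p, q}"
    | w where "{p, q} = {u, w}" "{v, w} \<in> E" "w \<noteq> u"
    unfolding contract_edges_def by blast
  then show ?thesis
  proof cases
    case 1
    then have "(p, q) \<in> lift_orientation u v E B" "merge_vertex u v p = p" "merge_vertex u v q = q"
      using pq by (auto simp: lift_orientation_def merge_vertex_def)
    then show ?thesis using that by metis
  next
    case 2
    have "w \<noteq> v" using ugraph_edge[OF ug 2(2)] by blast
    then have neq: "{v, w} \<noteq> {u, v}" "{w, v} \<noteq> {u, v}" using 2(3) by (auto simp: doubleton_eq_iff)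
    have mw: "merge_vertex u v w = w" "merge_vertex u v v = u"
      using \<open>w \<noteq> v\<close> by (simp_all add: merge_vertex_def)
    from 2(1) consider "p = u" "q = w" | "p = w" "q = u" by (auto simp: doubleton_eq_iff)
    then show ?thesis
    proof cases
      case 1
      then have "(v, w) \<in> lift_orientation u v E B"
        using 2(2) neq pq mw by (simp add: lift_orientation_def)
      then show ?thesis using that 1 mw by metis
    next
      case 2
      then have "(w, v) \<in> lift_orientation u v E B"
        using \<open>{v, w} \<in> E\<close> neq pq mw by (simp add: lift_orientation_def insert_commute)
      then show ?thesis using that 2 mw by metis
    qed
  qed
qed

lemma restrict_contract_arcs_lift_orientation:
  "restrict_arcs (V - {v}) (contract_arcs u v (lift_orientation u v E B))
    = restrict_arcs (V - {v}) B" (is "?C = ?B")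
proof
  show "?C \<subseteq> ?B"
    using contract_arcs_lift_orientation_subset unfolding restrict_arcs_def by blast
  show "?B \<subseteq> ?C"
  proof
    fix r assume "r \<in> restrict_arcs (V - {v}) B"
    then obtain p q where pq: "r = (p, q)" "(p, q) \<in> B" "p \<in> V - {v}" "q \<in> V - {v}"
      unfolding restrict_arcs_def by blast
    have "p \<noteq> q" using pq(2) acyclic_orientation_acyclic[OF B] unfolding acyclic_def by blast
    obtain a b where "(a, b) \<in> lift_orientation u v E B"
        "p = merge_vertex u v a" "q = merge_vertex u v b"
      using lift_orientation_preimage[OF pq(2)] by blast
    then have "(p, q) \<in> contract_arcs u v (lift_orientation u v E B)"
      using \<open>p \<noteq> q\<close> unfolding contract_arcs_def by blast
    then show "r \<in> ?C" using pq by (simp add: restrict_arcs_def)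
  qed
qed

end

lemma dtd_dominated_contract_edge:
  assumes ug: "ugraph V E" and uv: "{u, v} \<in> E"
  shows "dtd_dominated (contract_edge u v (V, E)) (V, E)"
proof -
  have "\<exists>A. acyclic_orientation V E A \<and> dag_dtd (V - {v}) B \<le> dag_dtd V A"
    if B: "acyclic_orientation (V - {v}) (contract_edges u v E) B" for B
  proof -
    let ?A = "lift_orientation u v E B"
    have uv': "u \<in> V" "v \<in> V" "u \<noteq> v" using ugraph_edge[OF ug uv] by blast+
    have finV: "finite V" using ug by (simp add: ugraph_def)
    have ao: "acyclic_orientation V E ?A" by (rule acyclic_orientation_lift_orientation[OF ug uv B])
    have acA: "acyclic ?A" by (rule acyclic_orientation_acyclic[OF ao])
    have "acyclic (contract_arcs u v ?A)"
      using acyclic_orientation_acyclic[OF B] contract_arcs_lift_orientation_subset[OF ug uv B]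
      by (rule acyclic_subset)
    moreover have "(u, v) \<in> ?A" by (simp add: lift_orientation_def)
    ultimately obtain e where e: "e \<le> dag_dtd V ?A" "elim_depth (V - {v}) (contract_arcs u v ?A) e"
      using elim_depth_contract_arcs[OF elim_depth_dag_dtd[OF finV acA] acA] uv' finV by blast
    from e(2) have "elim_depth (V - {v}) B e"
      by (rule elim_depth_cong[OF _ restrict_contract_arcs_lift_orientation[OF ug uv B]])
    then have "dag_dtd (V - {v}) B \<le> e" by (rule dag_dtd_le)
    with e(1) show ?thesis using ao by (meson order_trans)
  qed
  then show ?thesis by (simp add: contract_edge_pair)
qed

lemma acyclic_orientation_iso:
  assumes ug1: "ugraph V1 E1" and ug2: "ugraph V2 E2" and f: "bij_betw f V1 V2"
    and edges: "\<And>x y. x \<in> V1 \<Longrightarrow> y \<in> V1 \<Longrightarrow> {x, y} \<in> E1 \<longleftrightarrow> {f x, f y} \<in> E2"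
    and B: "acyclic_orientation V1 E1 B"
  shows "acyclic_orientation V2 E2 (map_arcs f B)"
  unfolding acyclic_orientation_def
proof (intro conjI allI impI)
  have inj: "inj_on f V1" and img: "f ` V1 = V2" using f by (simp_all add: bij_betw_def)
  have BV: "B \<subseteq> V1 \<times> V1" by (rule acyclic_orientation_subset[OF ug1 B])
  show "map_arcs f B \<subseteq> {(x, y). {x, y} \<in> E2}"
  proof
    fix r assume "r \<in> map_arcs f B"
    then obtain a b where ab: "r = (f a, f b)" "(a, b) \<in> B" unfolding map_arcs_def by blast
    then have "{a, b} \<in> E1" "a \<in> V1" "b \<in> V1" using acyclic_orientation_edge[OF B] BV by auto
    then show "r \<in> {(x, y). {x, y} \<in> E2}" using ab(1) edges by simp
  qed
  show "acyclic (map_arcs f B)"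
    by (rule acyclic_map_arcs[OF inj BV acyclic_orientation_acyclic[OF B]])
  fix x y assume xy: "{x, y} \<in> E2" "x \<noteq> y"
  then have "x \<in> f ` V1" "y \<in> f ` V1" using ugraph_edge[OF ug2 xy(1)] img by auto
  then obtain a b where ab: "a \<in> V1" "b \<in> V1" "x = f a" "y = f b" by blast
  then have "{a, b} \<in> E1" "a \<noteq> b" using xy edges by auto
  then have "(a, b) \<in> B \<longleftrightarrow> (b, a) \<notin> B" by (rule acyclic_orientation_iff[OF B])
  then show "(x, y) \<in> map_arcs f B \<longleftrightarrow> (y, x) \<notin> map_arcs f B"
    using map_arcs_iff[OF inj BV] ab by simp
qed

lemma dtd_dominated_iso:
  assumes ug1: "ugraph V1 E1" and ug2: "ugraph V2 E2" and iso: "graph_iso V1 E1 V2 E2"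
  shows "dtd_dominated (V1, E1) (V2, E2)"
proof -
  obtain f where f: "bij_betw f V1 V2" and edges: "\<forall>x\<in>V1. \<forall>y\<in>V1. {x, y} \<in> E1 \<longleftrightarrow> {f x, f y} \<in> E2"
    using iso unfolding graph_iso_def by blast
  have "dag_dtd V1 B \<le> dag_dtd V2 (map_arcs f B)" if B: "acyclic_orientation V1 E1 B" for B
  proof -
    let ?A = "map_arcs f B"
    let ?g = "inv_into V1 f"
    have ao: "acyclic_orientation V2 E2 ?A"
      using acyclic_orientation_iso[OF ug1 ug2 f _ B] edges by blast
    have finV2: "finite V2" using ug2 by (simp add: ugraph_def)
    have BV: "B \<subseteq> V1 \<times> V1" by (rule acyclic_orientation_subset[OF ug1 B])
    have g: "bij_betw ?g V2 V1" by (rule bij_betw_inv_into[OF f])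
    have "elim_depth (?g ` V2) (map_arcs ?g ?A) (dag_dtd V2 ?A)"
      using elim_depth_dag_dtd[OF finV2 acyclic_orientation_acyclic[OF ao]] g
        acyclic_orientation_subset[OF ug2 ao]
      by (intro elim_depth_map_arcs) (auto simp: bij_betw_def)
    moreover have "map_arcs ?g ?A = B"
      using f BV by (intro map_arcs_inverse) (auto simp: bij_betw_def)
    ultimately have "elim_depth V1 B (dag_dtd V2 ?A)" using g by (simp add: bij_betw_def)
    then show ?thesis by (rule dag_dtd_le)
  qed
  then show ?thesis
    using acyclic_orientation_iso[OF ug1 ug2 f] edges by auto
qed

lemma obtainable_dtd_dominated:
  "obtainable G G' \<Longrightarrow> ugraph (fst G) (snd G) \<Longrightarrow> ugraph (fst G') (snd G') \<and> dtd_dominated G' G"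
proof (induction rule: obtainable.induct)
  case (refl G)
  then show ?case using dtd_dominated_refl by blast
next
  case (del G G' x)
  obtain V E where G': "G' = (V, E)" by fastforce
  then have ug: "ugraph V E" and dom: "dtd_dominated (V, E) G" using del.IH del.prems by auto
  have "ugraph (V - {x}) {e \<in> E. x \<notin> e}" using ug by (rule ugraph_delete_vertex)
  moreover have "dtd_dominated (delete_vertex x (V, E)) G"
    using dtd_dominated_delete_vertex[OF ug] dom by (rule dtd_dominated_trans)
  ultimately show ?case using G' by (simp add: delete_vertex_def)
next
  case (con G G' u v)
  obtain V E where G': "G' = (V, E)" by fastforce
  then have ug: "ugraph V E" and dom: "dtd_dominated (V, E) G" using con.IH con.prems by auto
  have uv: "{u, v} \<in> E" using con.hyps(2) G' by simp
  have "ugraph (V - {v}) (contract_edges u v E)" by (rule ugraph_contract_edges[OF ug uv])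
  moreover have "dtd_dominated (contract_edge u v (V, E)) G"
    using dtd_dominated_contract_edge[OF ug uv] dom by (rule dtd_dominated_trans)
  ultimately show ?case using G' by (simp add: contract_edge_pair)
qed

theorem mainTheorem7:
  fixes VH :: "'a set" and EH :: "'a set set" and VI :: "'b set" and EI :: "'b set set"
  assumes "ugraph VH EH" and "ugraph VI EI"
    and "induced_minor VI EI VH EH"
  shows "dtd VI EI \<le> dtd VH EH"
proof -
  obtain G' where G': "obtainable (VH, EH) G'" "graph_iso VI EI (fst G') (snd G')"
    using assms(3) unfolding induced_minor_def by blast
  have ug: "ugraph (fst G') (snd G')" and minor: "dtd_dominated G' (VH, EH)"
    using obtainable_dtd_dominated[OF G'(1)] assms(1) by (simp_all only: fst_conv snd_conv)
  have "dtd_dominated (VI, EI) G'"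
    using dtd_dominated_iso[OF assms(2) ug G'(2)] by (simp only: prod.collapse)
  then have "dtd_dominated (VI, EI) (VH, EH)" using minor by (rule dtd_dominated_trans)
  then show ?thesis by (rule dtd_le_if_dominated[OF assms(2,1)])
qed

end
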